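(* In the setting of the context, let $U>0$, $H=H_{\mathrm{hop}}+H_{\mathrm{int}}$ with $H_{\mathrm{int}}=U\sum_{v\in\mathcal{V}_L}n_{v,\uparrow}n_{v,\downarrow}$, and let the electron number be $N_e=|\mathcal{V}_L|-L$. Then the ferromagnetic state $\Phi_\uparrow=\big(\prod_{v\in\mathcal{V}_L^W}a^\dagger_{v,\uparrow}\big)\Phi_0$, in which every single-electron ground state of $H_{\mathrm{hop}}$ is occupied by one $\uparrow$-spin electron (total $S^{(3)}$ eigenvalue $N_e/2$), is a ground state of $H$, with energy $0$.
   Context: Construction. Let $G_l=(V_l,E_l)$, $l=1,\dots,L$, be complete graphs with $|V_l|\ge 2$. In each $V_l$ one vertex $v_l^0$ is painted black, the others white. Set $\mathcal{G}_1=G_1$. For $l=2,\dots,L$: choose an integer $z_l$ with $0<z_l\le |V_l|-1$, choose $z_l$ white vertices of $V_l$ and identify each with a vertex (black or white; distinct with distinct) of $\mathcal{V}_{l-1}$; $\mathcal{V}_l=\mathcal{V}_{l-1}\cup V_l$ with these identifications and $\mathcal{E}_l=\mathcal{E}_{l-1}\cup E_l$ (edges joining the same two vertices merged). A white vertex identified with a black one becomes black; two identified white vertices stay white; $v_l^0$ is never identified with an earlier vertex. The black vertices of $\mathcal{G}_L$ are exactly $v_1^0,\dots,v_L^0$; $\mathcal{V}_L^W$ is the set of white vertices; $V_l$ is regarded as a subset of $\mathcal{V}_L$. Weights: $w(v)=\#\{l: v\in V_l\}$, $w(e)=\#\{l: e\in E_l\}$. Directed edges $\vec{\mathcal{E}}_L=\bigcup_l\{(v,v_l^0):v\in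 V_l\setminus\{v_l^0\}\}$; directed paths, reachable set $R(v)$ (containing $v$ via the trivial path), and number $N(v\to u)$ of directed paths from $v$ to $u$ defined as usual; $|(v\to u)_j|$ is the number of vertices on the $j$-th path. Fermions $c_{v,\sigma}$ on $\mathcal{V}_L$ with canonical anticommutation relations, vacuum $\Phi_0$, $n_{v,\sigma}=c^\dagger_{v,\sigma}c_{v,\sigma}$. $H_{\mathrm{hop}}=\sum_{v,v'}\sum_\sigma t_{v,v'}c^\dagger_{v,\sigma}c_{v',\sigma}$ with $t_{v,v'}=w(e)t$ for $e=\{v,v'\}\in\mathcal{E}_L$, $t_{v,v}=w(v)t$, $0$ otherwise, $t>0$. For white $v$, $a_{v,\sigma}=\sum_{u\in R(v)}\big(\sum_{j=1}^{N(v\to u)}(-1)^{|(v\to u)_j|-1}\big)c_{u,\sigma}$. *)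

theory Defs
  imports Complex_Main "HOL-Library.Product_Lexorder"
begin

section \<open>Fermionic Fock space on modes (vertex, spin); spin True = up, False = down\<close>

text \<open>A Fock vector is given by its coefficients in the occupation-number basis
  |S> = c^dag_{m1} ... c^dag_{mk} Phi_0 with m1 < ... < mk (lexicographic order on modes).\<close>

type_synonym 'v fock = "('v \<times> bool) set \<Rightarrow> complex"

definition ann :: "'v::linorder \<times> bool \<Rightarrow> 'v fock \<Rightarrow> 'v fock" where
  "ann m \<Psi> = (\<lambda>S. if m \<notin> S then (-1) ^ card {k\<in>S. k < m} * \<Psi> (insert m S) else 0)"

definition cre :: "'v::linorder \<times> bool \<Rightarrow> 'v fock \<Rightarrow> 'v fock" where
  "cre m \<Psi> = (\<lambda>S. if m \<in> S then (-1) ^ card {k\<in>S. k < m} * \<Psi> (S - {m}) else 0)"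

definition num :: "'v::linorder \<times> bool \<Rightarrow> 'v fock \<Rightarrow> 'v fock" where
  "num m \<Psi> = cre m (ann m \<Psi>)"

definition vac :: "'v fock" where
  "vac = (\<lambda>S. if S = {} then 1 else 0)"

text \<open>V l (l = 1..L) is the image of the vertex set of G_l in the final vertex set,
  b l is the black vertex v_l^0.\<close>

definition graph_construction :: "nat \<Rightarrow> (nat \<Rightarrow> 'v set) \<Rightarrow> (nat \<Rightarrow> 'v) \<Rightarrow> bool" where
  "graph_construction L V b \<longleftrightarrow> 1 \<le> L \<and>
     (\<forall>l\<in>{1..L}. finite (V l) \<and> 2 \<le> card (V l) \<and> b l \<in> V l \<and>
        (\<forall>k\<in>{1..<l}. b l \<notin> V k) \<and>
        (2 \<le> l \<longrightarrow> V l \<inter> (\<Union>k\<in>{1..<l}. V k) \<noteq> {}))"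

definition allV :: "nat \<Rightarrow> (nat \<Rightarrow> 'v set) \<Rightarrow> 'v set" where
  "allV L V = (\<Union>l\<in>{1..L}. V l)"

definition white :: "nat \<Rightarrow> (nat \<Rightarrow> 'v set) \<Rightarrow> (nat \<Rightarrow> 'v) \<Rightarrow> 'v set" where
  "white L V b = allV L V - b ` {1..L}"

definition vweight :: "nat \<Rightarrow> (nat \<Rightarrow> 'v set) \<Rightarrow> 'v \<Rightarrow> nat" where
  "vweight L V v = card {l\<in>{1..L}. v \<in> V l}"

definition eweight :: "nat \<Rightarrow> (nat \<Rightarrow> 'v set) \<Rightarrow> 'v set \<Rightarrow> nat" where
  "eweight L V e = card {l\<in>{1..L}. e \<subseteq> V l}"

definition is_edge :: "nat \<Rightarrow> (nat \<Rightarrow> 'v set) \<Rightarrow> 'v \<Rightarrow> 'v \<Rightarrow> bool" where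
  "is_edge L V v v' \<longleftrightarrow> v \<noteq> v' \<and> (\<exists>l\<in>{1..L}. {v, v'} \<subseteq> V l)"

definition hop :: "nat \<Rightarrow> (nat \<Rightarrow> 'v set) \<Rightarrow> real \<Rightarrow> 'v \<Rightarrow> 'v \<Rightarrow> real" where
  "hop L V t v v' =
     (if v = v' then real (vweight L V v) * t
      else if is_edge L V v v' then real (eweight L V {v, v'}) * t else 0)"

definition dedges :: "nat \<Rightarrow> (nat \<Rightarrow> 'v set) \<Rightarrow> (nat \<Rightarrow> 'v) \<Rightarrow> ('v \<times> 'v) set" where
  "dedges L V b = {(v, b l) | v l. l \<in> {1..L} \<and> v \<in> V l - {b l}}"

text \<open>Directed paths from v to u, as lists of vertices (trivial path [v] included).\<close>
definition dpaths :: "('v \<times> 'v) set \<Rightarrow> 'v \<Rightarrow> 'v \<Rightarrow> 'v list set" where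
  "dpaths E v u = {xs. xs \<noteq> [] \<and> hd xs = v \<and> last xs = u \<and>
       (\<forall>i. Suc i < length xs \<longrightarrow> (xs ! i, xs ! Suc i) \<in> E)}"

definition reach :: "('v \<times> 'v) set \<Rightarrow> 'v \<Rightarrow> 'v set" where
  "reach E v = {u. dpaths E v u \<noteq> {}}"

definition acoef :: "('v \<times> 'v) set \<Rightarrow> 'v \<Rightarrow> 'v \<Rightarrow> int" where
  "acoef E v u = (\<Sum>xs\<in>dpaths E v u. (-1) ^ (length xs - 1))"

definition adag :: "nat \<Rightarrow> (nat \<Rightarrow> 'v::linorder set) \<Rightarrow> (nat \<Rightarrow> 'v) \<Rightarrow> 'v \<Rightarrow> bool \<Rightarrow> 'v fock \<Rightarrow> 'v fock" where
  "adag L V b v \<sigma> \<Psi> = (\<lambda>S. \<Sum>u\<in>reach (dedges L V b) v.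
       cnj (of_int (acoef (dedges L V b) v u)) * cre (u, \<sigma>) \<Psi> S)"

definition Phi_up :: "nat \<Rightarrow> (nat \<Rightarrow> 'v::linorder set) \<Rightarrow> (nat \<Rightarrow> 'v) \<Rightarrow> 'v fock" where
  "Phi_up L V b = foldr (\<lambda>v \<Psi>. adag L V b v True \<Psi>) (sorted_list_of_set (white L V b)) vac"

definition H_hop :: "nat \<Rightarrow> (nat \<Rightarrow> 'v::linorder set) \<Rightarrow> real \<Rightarrow> 'v fock \<Rightarrow> 'v fock" where
  "H_hop L V t \<Psi> = (\<lambda>S. \<Sum>v\<in>allV L V. \<Sum>v'\<in>allV L V. \<Sum>\<sigma>\<in>UNIV.
       of_real (hop L V t v v') * cre (v, \<sigma>) (ann (v', \<sigma>) \<Psi>) S)"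

definition H_int :: "nat \<Rightarrow> (nat \<Rightarrow> 'v::linorder set) \<Rightarrow> real \<Rightarrow> 'v fock \<Rightarrow> 'v fock" where
  "H_int L V U \<Psi> = (\<lambda>S. \<Sum>v\<in>allV L V. of_real U * num (v, True) (num (v, False) \<Psi>) S)"

definition Ham :: "nat \<Rightarrow> (nat \<Rightarrow> 'v::linorder set) \<Rightarrow> real \<Rightarrow> real \<Rightarrow> 'v fock \<Rightarrow> 'v fock" where
  "Ham L V t U \<Psi> = (\<lambda>S. H_hop L V t \<Psi> S + H_int L V U \<Psi> S)"

definition in_sector :: "nat \<Rightarrow> (nat \<Rightarrow> 'v set) \<Rightarrow> nat \<Rightarrow> 'v fock \<Rightarrow> bool" where
  "in_sector L V N \<Psi> \<longleftrightarrow> (\<forall>S. \<Psi> S \<noteq> 0 \<longrightarrow> S \<subseteq> allV L V \<times> UNIV \<and> card S = N)"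

end

theory Submission
  imports Defs "HOL-Library.Complex_Order"
begin

text \<open>Let \<open>B(l,\<sigma>) = \<Sum>\<^bsub>v \<in> V\<^sub>l\<^esub> c(v,\<sigma>)\<close>. Because every \<open>G\<^sub>l\<close> is complete, the hopping
  amplitude between \<open>v\<close> and \<open>v'\<close> is \<open>t\<close> times the number of cliques containing both, so
  \<open>H\<^sub>h\<^sub>o\<^sub>p = t \<Sum>\<^bsub>l,\<sigma>\<^esub> B(l,\<sigma>)\<^sup>\<dagger> B(l,\<sigma>)\<close>. Together with the on-site repulsion this makes
  \<open>H\<close> positive semidefinite, so no eigenvalue is negative. A directed path ending at the black
  vertex \<open>v\<^sub>l\<^sup>0\<close> is a path to a vertex of \<open>V\<^sub>l - {v\<^sub>l\<^sup>0}\<close> followed by one arc; hence the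
  signed path counts defining \<open>a(v,\<sigma>)\<close> sum to zero over every clique \<open>V\<^sub>l\<close>. By the
  anticommutation relations \<open>B(l,\<up>)\<close> then anticommutes with every \<open>a(v,\<up>)\<^sup>\<dagger>\<close> and
  annihilates \<open>\<Phi>\<^sub>\<up>\<close>, so \<open>H\<^sub>h\<^sub>o\<^sub>p \<Phi>\<^sub>\<up> = 0\<close>; and \<open>H\<^sub>i\<^sub>n\<^sub>t \<Phi>\<^sub>\<up> = 0\<close> because \<open>\<Phi>\<^sub>\<up>\<close> has no down
  spin. Finally \<open>\<Phi>\<^sub>\<up> \<noteq> 0\<close>: on configurations of white up spins \<open>a(v,\<up>)\<^sup>\<dagger>\<close> acts as
  \<open>c(v,\<up>)\<^sup>\<dagger>\<close>.\<close>

section \<open>Fermion operators\<close>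

definition n_below :: "'a::linorder set \<Rightarrow> 'a \<Rightarrow> nat" where
  "n_below S m = card {k\<in>S. k < m}"

lemma ann_apply: "ann m \<Psi> S = (if m \<notin> S then (-1) ^ n_below S m * \<Psi> (insert m S) else 0)"
  by (simp add: ann_def n_below_def)

lemma cre_apply: "cre m \<Psi> S = (if m \<in> S then (-1) ^ n_below S m * \<Psi> (S - {m}) else 0)"
  by (simp add: cre_def n_below_def)

lemma n_below_remove [simp]: "n_below (S - {m}) m = n_below S m"
  and n_below_insert [simp]: "n_below (insert m S) m = n_below S m"
  unfolding n_below_def by (rule arg_cong[where f = card], auto)+

lemma n_below_insert_less:
  "finite S \<Longrightarrow> m \<notin> S \<Longrightarrow> m < m' \<Longrightarrow> n_below (insert m S) m' = Suc (n_below S m')"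
proof -
  assume "finite S" "m \<notin> S" "m < m'"
  then have "{k\<in>insert m S. k < m'} = insert m {k\<in>S. k < m'}" "m \<notin> {k\<in>S. k < m'}" by auto
  with \<open>finite S\<close> show ?thesis unfolding n_below_def by simp
qed

lemma n_below_insert_greater: "m' < m \<Longrightarrow> n_below (insert m S) m' = n_below S m'"
  unfolding n_below_def by (rule arg_cong[where f = card]) auto

text \<open>Finiteness of \<open>S\<close> is needed: for infinite \<open>S\<close> the sign exponent \<open>card\<close> is junk.\<close>

lemma ann_cre_anticomm:
  assumes "finite S" "m \<noteq> m'"
  shows "ann m (cre m' \<Psi>) S = - cre m' (ann m \<Psi>) S"
proof (cases "m \<notin> S \<and> m' \<in> S")
  case False
  then show ?thesis using assms(2) by (auto simp: ann_apply cre_apply)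
next
  case True
  define S' where "S' = S - {m'}"
  have S: "S = insert m' S'" "m' \<notin> S'" "m \<notin> S'" "finite S'"
    using True assms unfolding S'_def by auto
  have "m \<notin> S" using True by simp
  have "insert m S - {m'} = insert m S'" using S assms(2) by auto
  moreover have "odd (n_below (insert m S) m' + n_below S' m + n_below S' m' + n_below S m)"
  proof (cases "m < m'")
    case True
    then show ?thesis using S(1) n_below_insert_less[OF assms(1) \<open>m \<notin> S\<close> True]
      n_below_insert_greater[of m m' S'] by auto
  next
    case False
    then have "m' < m" using assms(2) by simp
    then show ?thesis using S n_below_insert_less[of S' m' m] n_below_insert_greater[of m' m S]
      by auto
  qed
  then have "(-1::complex) ^ n_below S m * (-1) ^ n_below (insert m S) m'
             = - ((-1) ^ n_below S' m' * (-1) ^ n_below S' m)"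
    by (auto simp: minus_one_power_iff simp flip: power_add)
  ultimately show ?thesis using True S by (simp add: ann_apply cre_apply flip: mult.assoc)
qed

lemma ann_cre_add_cre_ann: "ann m (cre m \<Psi>) S + cre m (ann m \<Psi>) S = \<Psi> S"
proof (cases "m \<in> S")
  case True
  then have "insert m (S - {m}) = S" by auto
  with True show ?thesis by (simp add: ann_apply cre_apply flip: power_add)
qed (simp add: ann_apply cre_apply flip: power_add)

lemma num_apply: "num m \<Psi> S = (if m \<in> S then \<Psi> S else 0)"
  using ann_cre_add_cre_ann[of m \<Psi> S] by (auto simp: num_def ann_apply cre_apply)

lemma cre_sum: "cre m (\<lambda>S. \<Sum>i\<in>I. f i S) S = (\<Sum>i\<in>I. cre m (f i) S)"
  by (simp add: cre_def sum_distrib_left)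

lemma ann_sum: "ann m (\<lambda>S. \<Sum>i\<in>I. f i S) S = (\<Sum>i\<in>I. ann m (f i) S)"
  by (simp add: ann_def sum_distrib_left)

lemma ann_cmult: "ann m (\<lambda>S. c * f S) S = c * ann m f S"
  by (simp add: ann_def)

lemma cre_zero: "cre m (\<lambda>_. 0) = (\<lambda>_. 0)"
  by (simp add: cre_def fun_eq_iff)

lemma ann_sum_cre_sum_anticomm:
  assumes "finite W" "finite R" "finite S"
  shows "(\<Sum>v\<in>W. ann (v, \<sigma>) (\<lambda>S. \<Sum>u\<in>R. c u * cre (u, \<sigma>) \<Psi> S) S)
    = (\<Sum>v\<in>W \<inter> R. c v) * \<Psi> S - (\<Sum>u\<in>R. c u * cre (u, \<sigma>) (\<lambda>S. \<Sum>v\<in>W. ann (v, \<sigma>) \<Psi> S) S)"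
proof -
  have anticomm: "ann (v, \<sigma>) (cre (u, \<sigma>) \<Psi>) S
      = (if v = u then \<Psi> S else 0) - cre (u, \<sigma>) (ann (v, \<sigma>) \<Psi>) S" for u v
    using ann_cre_add_cre_ann[of "(u, \<sigma>)" \<Psi> S] ann_cre_anticomm[OF assms(3), of "(v, \<sigma>)" "(u, \<sigma>)" \<Psi>]
    by (cases "v = u") (auto simp: algebra_simps)
  have delta: "(\<Sum>v\<in>W. \<Sum>u\<in>R. c u * (if v = u then \<Psi> S else 0)) = (\<Sum>v\<in>W \<inter> R. c v) * \<Psi> S"
    (is "?lhs = _")
  proof -
    have "?lhs = (\<Sum>v\<in>W. if v \<in> R then c v * \<Psi> S else 0)"
      using assms(2) by (simp add: sum.delta' if_distrib[of "(*) (c _)"] cong: if_cong)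
    also have "\<dots> = (\<Sum>v\<in>W \<inter> R. c v) * \<Psi> S"
      using assms(1) by (auto simp: sum.inter_restrict sum_distrib_right intro!: sum.cong)
    finally show ?thesis .
  qed
  show ?thesis
    by (simp add: delta[symmetric] ann_sum ann_cmult cre_sum anticomm right_diff_distrib
        sum_subtractf sum_distrib_left sum.swap[of _ W R])
qed

definition fock_inner :: "'m set \<Rightarrow> ('m set \<Rightarrow> complex) \<Rightarrow> ('m set \<Rightarrow> complex) \<Rightarrow> complex" where
  "fock_inner M \<Psi> \<Phi> = (\<Sum>S\<in>Pow M. cnj (\<Psi> S) * \<Phi> S)"

lemma fock_inner_sum_left: "fock_inner M (\<lambda>S. \<Sum>i\<in>I. f i S) \<Phi> = (\<Sum>i\<in>I. fock_inner M (f i) \<Phi>)"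
  unfolding fock_inner_def by (simp add: sum_distrib_right sum.swap[of _ I])

lemma fock_inner_sum_right: "fock_inner M \<Psi> (\<lambda>S. \<Sum>i\<in>I. f i S) = (\<Sum>i\<in>I. fock_inner M \<Psi> (f i))"
  unfolding fock_inner_def by (simp add: sum_distrib_left sum.swap[of _ I])

lemma fock_inner_add_right:
  "fock_inner M \<Psi> (\<lambda>S. \<Phi> S + \<Phi>' S) = fock_inner M \<Psi> \<Phi> + fock_inner M \<Psi> \<Phi>'"
  unfolding fock_inner_def by (simp add: distrib_left sum.distrib)

lemma fock_inner_cmult_right: "fock_inner M \<Psi> (\<lambda>S. c * \<Phi> S) = c * fock_inner M \<Psi> \<Phi>"
  unfolding fock_inner_def by (simp add: sum_distrib_left mult_ac)

lemma fock_inner_self: "fock_inner M \<Psi> \<Psi> = of_real (\<Sum>S\<in>Pow M. (cmod (\<Psi> S))\<^sup>2)"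
  unfolding fock_inner_def by (simp add: complex_norm_square mult.commute del: of_real_power)

lemma fock_inner_self_nonneg: "0 \<le> fock_inner M \<Psi> \<Psi>"
  by (simp add: fock_inner_self less_eq_complex_def sum_nonneg)

lemma fock_inner_multiplication_nonneg:
  "(\<And>S. 0 \<le> c S) \<Longrightarrow> 0 \<le> fock_inner M \<Psi> (\<lambda>S. of_real (c S) * \<Psi> S)"
  unfolding fock_inner_def
  by (intro sum_nonneg) (simp add: less_eq_complex_def algebra_simps flip: power2_eq_square)

lemma fock_inner_cre:
  assumes "finite M" "m \<in> M"
  shows "fock_inner M \<Psi> (cre m \<Phi>) = fock_inner M (ann m \<Psi>) \<Phi>"
proof -
  have "fock_inner M \<Psi> (cre m \<Phi>)
      = (\<Sum>S\<in>{S\<in>Pow M. m \<in> S}. cnj (\<Psi> S) * (-1) ^ n_below S m * \<Phi> (S - {m}))"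
    unfolding fock_inner_def using assms(1)
    by (subst sum.inter_filter) (auto simp: cre_apply intro!: sum.cong)
  also have "\<dots> = (\<Sum>T\<in>{T\<in>Pow M. m \<notin> T}. cnj (\<Psi> (insert m T)) * (-1) ^ n_below T m * \<Phi> T)"
    by (rule sum.reindex_bij_witness[where i = "insert m" and j = "\<lambda>S. S - {m}"])
      (use assms in \<open>auto simp: insert_absorb\<close>)
  also have "\<dots> = fock_inner M (ann m \<Psi>) \<Phi>"
    unfolding fock_inner_def using assms(1)
    by (subst sum.inter_filter) (auto simp: ann_apply intro!: sum.cong)
  finally show ?thesis .
qed

lemma nonneg_eigenvalue_of_nonneg_form:
  assumes "finite M" "S\<^sub>0 \<subseteq> M" "\<Psi> S\<^sub>0 \<noteq> 0"
    and "0 \<le> fock_inner M \<Psi> (\<lambda>S. of_real E * \<Psi> S)"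
  shows "0 \<le> E"
proof -
  define n where "n = (\<Sum>S\<in>Pow M. (cmod (\<Psi> S))\<^sup>2)"
  have "0 < n"
    unfolding n_def using assms(1-3) by (intro sum_pos2[of _ S\<^sub>0]) auto
  moreover have "0 \<le> E * n"
    using assms(4) by (simp add: fock_inner_cmult_right fock_inner_self n_def less_eq_complex_def)
  ultimately show ?thesis by (simp add: zero_le_mult_iff)
qed

section \<open>Signed path counts\<close>

lemma singleton_in_dpaths_iff [simp]: "[x] \<in> dpaths E w u \<longleftrightarrow> x = w \<and> u = w"
  unfolding dpaths_def by auto

lemma snoc_in_dpaths_iff:
  assumes "ys \<noteq> []"
  shows "ys @ [z] \<in> dpaths E w u \<longleftrightarrow> z = u \<and> ys \<in> dpaths E w (last ys) \<and> (last ys, z) \<in> E"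
proof -
  have "(\<forall>i. Suc i < length (ys @ [z]) \<longrightarrow> ((ys @ [z]) ! i, (ys @ [z]) ! Suc i) \<in> E)
      \<longleftrightarrow> (\<forall>i. Suc i < length ys \<longrightarrow> (ys ! i, ys ! Suc i) \<in> E) \<and> (last ys, z) \<in> E"
    (is "?all \<longleftrightarrow> _")
  proof (intro iffI conjI allI impI)
    assume ?all
    then show "(ys ! i, ys ! Suc i) \<in> E" if "Suc i < length ys" for i
      using \<open>?all\<close>[rule_format, of i] that by (simp add: nth_append)
    show "(last ys, z) \<in> E"
      using \<open>?all\<close>[rule_format, of "length ys - 1"] assms by (simp add: nth_append last_conv_nth)
  next
    fix i assume i: "Suc i < length (ys @ [z])"
      and edges: "(\<forall>i. Suc i < length ys \<longrightarrow> (ys ! i, ys ! Suc i) \<in> E) \<and> (last ys, z) \<in> E"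
    show "((ys @ [z]) ! i, (ys @ [z]) ! Suc i) \<in> E"
    proof (cases "Suc i < length ys")
      case False
      then have "i = length ys - 1" using i by simp
      then show ?thesis using edges assms by (simp add: nth_append last_conv_nth)
    qed (use edges in \<open>simp add: nth_append\<close>)
  qed
  then show ?thesis using assms unfolding dpaths_def by auto
qed

lemma dpaths_eq:
  "dpaths E w u = (if u = w then {[w]} else {}) \<union> (\<lambda>ys. ys @ [u]) ` (\<Union>x\<in>{x. (x, u) \<in> E}. dpaths E w x)"
proof (intro equalityI subsetI)
  fix xs assume xs: "xs \<in> dpaths E w u"
  then have "xs \<noteq> []" unfolding dpaths_def by auto
  show "xs \<in> (if u = w then {[w]} else {}) \<union> (\<lambda>ys. ys @ [u]) ` (\<Union>x\<in>{x. (x, u) \<in> E}. dpaths E w x)"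
  proof (cases "butlast xs = []")
    case True
    then have "xs = [last xs]" using \<open>xs \<noteq> []\<close> by (metis append_butlast_last_id append_Nil)
    then have "xs = [w]" "u = w" using xs by (metis singleton_in_dpaths_iff)+
    then show ?thesis by simp
  next
    case False
    have "butlast xs @ [last xs] \<in> dpaths E w u" using xs \<open>xs \<noteq> []\<close> by simp
    then have "last xs = u" "butlast xs \<in> dpaths E w (last (butlast xs))" "(last (butlast xs), u) \<in> E"
      unfolding snoc_in_dpaths_iff[OF False] by auto
    then show ?thesis using \<open>xs \<noteq> []\<close>
      by (intro UnI2 image_eqI[of _ _ "butlast xs"]) auto
  qed
next
  fix xs assume "xs \<in> (if u = w then {[w]} else {}) \<union> (\<lambda>ys. ys @ [u]) ` (\<Union>x\<in>{x. (x, u) \<in> E}. dpaths E w x)"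
  then consider "u = w" "xs = [w]"
    | x ys where "(x, u) \<in> E" "ys \<in> dpaths E w x" "xs = ys @ [u]"
    by (cases "u = w") auto
  then show "xs \<in> dpaths E w u"
  proof cases
    case 2
    then have "ys \<noteq> []" "last ys = x" unfolding dpaths_def by auto
    with 2 show ?thesis by (simp add: snoc_in_dpaths_iff)
  qed simp
qed

lemma acoef_eq:
  assumes "finite {x. (x, u) \<in> E}" and "\<And>x. (x, u) \<in> E \<Longrightarrow> finite (dpaths E w x)"
  shows "acoef E w u = (if u = w then 1 else 0) - (\<Sum>x | (x, u) \<in> E. acoef E w x)"
proof -
  let ?P = "{x. (x, u) \<in> E}"
  let ?ext = "(\<lambda>ys. ys @ [u]) ` (\<Union>x\<in>?P. dpaths E w x)"
  have nonempty: "ys \<noteq> []" if "ys \<in> dpaths E w x" for ys x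
    using that unfolding dpaths_def by auto
  have "(\<Sum>xs\<in>?ext. (-1) ^ (length xs - 1)) = (\<Sum>ys\<in>(\<Union>x\<in>?P. dpaths E w x). (-1::int) ^ length ys)"
    by (subst sum.reindex) (auto simp: inj_on_def)
  also have "\<dots> = (\<Sum>x\<in>?P. \<Sum>ys\<in>dpaths E w x. (-1) ^ length ys)"
    using assms by (intro sum.UNION_disjoint) (auto simp: dpaths_def)
  also have "\<dots> = - (\<Sum>x\<in>?P. acoef E w x)"
    unfolding acoef_def sum_negf[symmetric]
  proof (intro sum.cong refl)
    fix x ys assume "ys \<in> dpaths E w x"
    then have "length ys = Suc (length ys - 1)" using nonempty by simp
    then show "(-1::int) ^ length ys = - ((-1) ^ (length ys - 1))" by (metis mult_minus1 power_Suc)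
  qed
  finally have ext: "(\<Sum>xs\<in>?ext. (-1) ^ (length xs - 1)) = - (\<Sum>x\<in>?P. acoef E w x)" .
  have "acoef E w u = (\<Sum>xs\<in>(if u = w then {[w]} else {}). (-1) ^ (length xs - 1))
      + (\<Sum>xs\<in>?ext. (-1) ^ (length xs - 1))"
    unfolding acoef_def using assms
    by (subst dpaths_eq, intro sum.union_disjoint) (auto dest: nonempty)
  then show ?thesis using ext by simp
qed

section \<open>The construction and its Hamiltonian\<close>

lemma sum_pairs_card_common_eq:
  fixes f :: "'a \<Rightarrow> 'a \<Rightarrow> 'b::comm_semiring_1"
  assumes "finite I" "finite A" "\<And>l. l \<in> I \<Longrightarrow> V l \<subseteq> A"
  shows "(\<Sum>v\<in>A. \<Sum>v'\<in>A. of_nat (card {l\<in>I. v \<in> V l \<and> v' \<in> V l}) * f v v')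
    = (\<Sum>l\<in>I. \<Sum>v\<in>V l. \<Sum>v'\<in>V l. f v v')"
proof -
  have "(\<Sum>v\<in>V l. \<Sum>v'\<in>V l. f v v') = (\<Sum>v\<in>A. \<Sum>v'\<in>A. if v \<in> V l \<and> v' \<in> V l then f v v' else 0)"
    if "l \<in> I" for l
  proof -
    have restrict: "(\<Sum>x\<in>A. if x \<in> V l then g x else 0) = sum g (V l)" for g :: "'a \<Rightarrow> 'b"
      using sum.inter_restrict[OF assms(2), of g "V l"] assms(3)[OF that] by (simp add: Int_absorb1)
    have "(\<Sum>v\<in>A. \<Sum>v'\<in>A. if v \<in> V l \<and> v' \<in> V l then f v v' else 0)
        = (\<Sum>v\<in>A. if v \<in> V l then \<Sum>v'\<in>A. if v' \<in> V l then f v v' else 0 else 0)"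
      by (intro sum.cong) auto
    then show ?thesis by (simp add: restrict)
  qed
  then have "(\<Sum>l\<in>I. \<Sum>v\<in>V l. \<Sum>v'\<in>V l. f v v')
      = (\<Sum>v\<in>A. \<Sum>v'\<in>A. \<Sum>l\<in>I. if v \<in> V l \<and> v' \<in> V l then f v v' else 0)"
    by (simp add: sum.swap[of _ I])
  also have "\<dots> = (\<Sum>v\<in>A. \<Sum>v'\<in>A. of_nat (card {l\<in>I. v \<in> V l \<and> v' \<in> V l}) * f v v')"
    using assms(1) by (simp add: sum.If_cases Int_def)
  finally show ?thesis by simp
qed

locale clique_construction =
  fixes L :: nat and V :: "nat \<Rightarrow> 'v::linorder set" and b :: "nat \<Rightarrow> 'v"
  assumes construction: "graph_construction L V b"
begin

abbreviation "vertices \<equiv> allV L V"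
abbreviation "blacks \<equiv> b ` {1..L}"
abbreviation "whites \<equiv> white L V b"
abbreviation "arcs \<equiv> dedges L V b"
abbreviation "modes \<equiv> vertices \<times> (UNIV :: bool set)"

lemma finite_clique: "l \<in> {1..L} \<Longrightarrow> finite (V l)"
  and black_in_clique: "l \<in> {1..L} \<Longrightarrow> b l \<in> V l"
  and black_notin_earlier_clique: "l \<in> {1..L} \<Longrightarrow> k \<in> {1..<l} \<Longrightarrow> b l \<notin> V k"
  using construction unfolding graph_construction_def by auto

lemma finite_vertices: "finite vertices"
  unfolding allV_def using finite_clique by auto

lemma clique_subset_vertices: "l \<in> {1..L} \<Longrightarrow> V l \<subseteq> vertices"
  unfolding allV_def by auto

lemma blacks_subset_vertices: "blacks \<subseteq> vertices"
  using black_in_clique clique_subset_vertices by blast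

lemma whites_eq: "whites = vertices - blacks"
  unfolding white_def ..

lemma finite_whites: "finite whites"
  using finite_vertices by (simp add: whites_eq)

lemma black_in_clique_le: "j \<in> {1..L} \<Longrightarrow> l \<in> {1..L} \<Longrightarrow> b j \<in> V l \<Longrightarrow> j \<le> l"
  using black_notin_earlier_clique[of j l] by force

lemma inj_on_black: "inj_on b {1..L}"
proof (rule inj_onI)
  fix j l assume "j \<in> {1..L}" "l \<in> {1..L}" "b j = b l"
  then show "j = l"
    using black_in_clique_le[of j l] black_in_clique_le[of l j] black_in_clique by (metis le_antisym)
qed

lemma card_whites: "card whites = card vertices - L"
  using card_Diff_subset[OF finite_subset[OF blacks_subset_vertices finite_vertices] blacks_subset_vertices]
    card_image[OF inj_on_black] by (simp add: whites_eq)

lemma arcs_into_black_iff: "l \<in> {1..L} \<Longrightarrow> (x, b l) \<in> arcs \<longleftrightarrow> x \<in> V l - {b l}"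
  unfolding dedges_def using inj_on_black by (auto dest: inj_onD)

lemma arc_target_black: "(x, u) \<in> arcs \<Longrightarrow> u \<in> blacks"
  unfolding dedges_def by auto

lemma dpaths_to_nonblack: "u \<notin> blacks \<Longrightarrow> dpaths arcs w u = (if u = w then {[w]} else {})"
  by (subst dpaths_eq) (auto dest: arc_target_black)

lemma finite_dpaths_to_black: "l \<in> {1..L} \<Longrightarrow> finite (dpaths arcs w (b l))"
proof (induction l rule: less_induct)
  case (less l)
  have "finite (dpaths arcs w x)" if "x \<in> V l - {b l}" for x
  proof (cases "x \<in> blacks")
    case True
    then obtain j where j: "j \<in> {1..L}" "x = b j" by blast
    then have "j < l" using black_in_clique_le[of j l] that less.prems by fastforce
    then show ?thesis using less.IH j by blast
  qed (simp add: dpaths_to_nonblack)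
  then show ?case
    using finite_clique[OF less.prems]
    by (subst dpaths_eq) (simp add: arcs_into_black_iff[OF less.prems])
qed

lemma finite_dpaths: "finite (dpaths arcs w u)"
  by (cases "u \<in> blacks") (auto simp: finite_dpaths_to_black dpaths_to_nonblack)

lemma self_in_reach: "w \<in> reach arcs w"
  unfolding reach_def using singleton_in_dpaths_iff[of w arcs w w] by blast

lemma reach_nonblack: "u \<in> reach arcs w \<Longrightarrow> u \<notin> blacks \<Longrightarrow> u = w"
  unfolding reach_def by (auto simp: dpaths_to_nonblack split: if_splits)

lemma reach_subset: "reach arcs w \<subseteq> insert w blacks"
  using reach_nonblack by blast

lemma finite_reach: "finite (reach arcs w)"
  using finite_subset[OF reach_subset] by auto

lemma acoef_outside_reach: "u \<notin> reach arcs w \<Longrightarrow> acoef arcs w u = 0"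
  unfolding reach_def acoef_def by auto

lemma acoef_self: "w \<notin> blacks \<Longrightarrow> acoef arcs w w = 1"
  unfolding acoef_def by (simp add: dpaths_to_nonblack)

lemma sum_acoef_clique:
  assumes "w \<notin> blacks" "l \<in> {1..L}"
  shows "(\<Sum>u\<in>V l. acoef arcs w u) = 0"
proof -
  have "{x. (x, b l) \<in> arcs} = V l - {b l}" "b l \<noteq> w"
    using assms by (auto simp: arcs_into_black_iff)
  then have "acoef arcs w (b l) = - (\<Sum>x\<in>V l - {b l}. acoef arcs w x)"
    using acoef_eq[where E = arcs and u = "b l" and w = w] finite_clique[OF assms(2)]
    by (simp add: finite_dpaths)
  then show ?thesis
    using sum.remove[OF finite_clique black_in_clique, OF assms(2) assms(2), of "acoef arcs w"] by simp
qed

lemma adag_eq: "adag L V b w \<sigma> \<Psi> = (\<lambda>S. \<Sum>u\<in>reach arcs w. of_int (acoef arcs w u) * cre (u, \<sigma>) \<Psi> S)"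
  unfolding adag_def by simp

definition clique_ann :: "nat \<Rightarrow> bool \<Rightarrow> 'v fock \<Rightarrow> 'v fock" where
  "clique_ann l \<sigma> \<Psi> = (\<lambda>S. \<Sum>v\<in>V l. ann (v, \<sigma>) \<Psi> S)"

lemma clique_ann_adag_anticomm:
  assumes "w \<in> whites" "l \<in> {1..L}" "finite S"
  shows "clique_ann l \<sigma> (adag L V b w \<sigma> \<Psi>) S = - adag L V b w \<sigma> (clique_ann l \<sigma> \<Psi>) S"
proof -
  have "(\<Sum>u\<in>V l \<inter> reach arcs w. acoef arcs w u) = (\<Sum>u\<in>V l. acoef arcs w u)"
    using finite_clique[OF assms(2)] acoef_outside_reach by (intro sum.mono_neutral_left) auto
  also have "\<dots> = 0"
    using assms(1,2) sum_acoef_clique by (simp add: whites_eq)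
  finally show ?thesis
    using ann_sum_cre_sum_anticomm[OF finite_clique[OF assms(2)] finite_reach assms(3),
        of \<sigma> "\<lambda>u. of_int (acoef arcs w u)" \<Psi>]
    unfolding clique_ann_def adag_eq by (simp flip: of_int_sum)
qed

definition up_state :: "'v list \<Rightarrow> 'v fock" where
  "up_state ws = foldr (\<lambda>v \<Psi>. adag L V b v True \<Psi>) ws vac"

lemma up_state_Cons: "up_state (w # ws) = adag L V b w True (up_state ws)"
  unfolding up_state_def by simp

lemma up_state_support:
  "set ws \<subseteq> whites \<Longrightarrow> up_state ws S \<noteq> 0 \<Longrightarrow> finite S \<and> S \<subseteq> vertices \<times> {True} \<and> card S = length ws"
proof (induction ws arbitrary: S)
  case Nil
  then show ?case by (simp add: up_state_def vac_def split: if_splits)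
next
  case (Cons w ws)
  then have "(\<Sum>u\<in>reach arcs w. of_int (acoef arcs w u) * cre (u, True) (up_state ws) S) \<noteq> 0"
    by (simp add: up_state_Cons adag_eq)
  then obtain u where u: "u \<in> reach arcs w" "cre (u, True) (up_state ws) S \<noteq> 0"
    by (metis (no_types, lifting) mult_zero_right sum.neutral)
  then have "(u, True) \<in> S" and "up_state ws (S - {(u, True)}) \<noteq> 0"
    by (auto simp: cre_apply split: if_splits)
  moreover have "u \<in> vertices"
    using u(1) reach_subset Cons.prems(1) blacks_subset_vertices by (auto simp: whites_eq)
  ultimately show ?case
    using Cons.IH[of "S - {(u, True)}"] Cons.prems(1) card_gt_0_iff[of S] by auto
qed

lemma clique_ann_up_state_finite:
  "set ws \<subseteq> whites \<Longrightarrow> l \<in> {1..L} \<Longrightarrow> finite S \<Longrightarrow> clique_ann l True (up_state ws) S = 0"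
proof (induction ws arbitrary: S)
  case Nil
  then show ?case by (simp add: up_state_def clique_ann_def ann_apply vac_def cong: if_cong)
next
  case (Cons w ws)
  then have "cre (u, True) (clique_ann l True (up_state ws)) S = 0" for u
    by (simp add: cre_apply)
  then show ?case
    using Cons.prems by (simp add: up_state_Cons clique_ann_adag_anticomm) (simp add: adag_eq)
qed

lemma clique_ann_up_state:
  assumes "set ws \<subseteq> whites" "l \<in> {1..L}"
  shows "clique_ann l \<sigma> (up_state ws) = (\<lambda>_. 0)"
proof
  fix S
  show "clique_ann l \<sigma> (up_state ws) S = 0"
  proof (cases "\<sigma> \<and> finite S")
    case False
    then have "up_state ws (insert (v, \<sigma>) S) = 0" for v
      using up_state_support[OF assms(1), of "insert (v, \<sigma>) S"] by auto
    then show ?thesis by (simp add: clique_ann_def ann_apply cong: if_cong)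
  qed (use clique_ann_up_state_finite[OF assms] in auto)
qed

lemma adag_on_whites:
  assumes "w \<in> whites" "S \<subseteq> whites \<times> {True}"
  shows "adag L V b w True \<Psi> S = cre (w, True) \<Psi> S"
proof -
  have "cre (u, True) \<Psi> S = 0" if "u \<in> reach arcs w - {w}" for u
  proof -
    have "u \<in> blacks" using that reach_nonblack by blast
    then have "(u, True) \<notin> S" using assms(2) by (auto simp: whites_eq)
    then show ?thesis by (simp add: cre_apply)
  qed
  then have "adag L V b w True \<Psi> S = of_int (acoef arcs w w) * cre (w, True) \<Psi> S"
    unfolding adag_eq by (subst sum.remove[OF finite_reach self_in_reach]) simp
  then show ?thesis using assms(1) acoef_self by (simp add: whites_eq)
qed

lemma up_state_at_whites:
  "distinct ws \<Longrightarrow> set ws \<subseteq> whites \<Longrightarrow> up_state ws ((\<lambda>v. (v, True)) ` set ws) \<noteq> 0"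
proof (induction ws)
  case Nil
  then show ?case by (simp add: up_state_def vac_def)
next
  case (Cons w ws)
  let ?S = "(\<lambda>v. (v, True)) ` set (w # ws)"
  have "up_state (w # ws) ?S = cre (w, True) (up_state ws) ?S"
    unfolding up_state_Cons using Cons.prems by (intro adag_on_whites) auto
  moreover have "?S - {(w, True)} = (\<lambda>v. (v, True)) ` set ws" using Cons.prems by auto
  ultimately show ?case using Cons by (simp add: cre_apply)
qed

lemma Phi_up_eq: "Phi_up L V b = up_state (sorted_list_of_set whites)"
  unfolding Phi_up_def up_state_def ..

lemma Phi_up_in_sector: "in_sector L V (card vertices - L) (Phi_up L V b)"
  using up_state_support[of "sorted_list_of_set whites"] finite_whites card_whites
  unfolding in_sector_def Phi_up_eq by fastforce

lemma Phi_up_nonzero: "Phi_up L V b \<noteq> (\<lambda>_. 0)"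
  using up_state_at_whites[of "sorted_list_of_set whites"] finite_whites
  unfolding Phi_up_eq by (metis distinct_sorted_list_of_set order_refl set_sorted_list_of_set)

lemma hop_eq: "hop L V t v v' = t * card {l\<in>{1..L}. v \<in> V l \<and> v' \<in> V l}"
proof -
  have "{l\<in>{1..L}. {v, v'} \<subseteq> V l} = {l\<in>{1..L}. v \<in> V l \<and> v' \<in> V l}" by auto
  moreover have "{l\<in>{1..L}. v \<in> V l \<and> v' \<in> V l} = {}" if "v \<noteq> v'" "\<not> is_edge L V v v'"
    using that unfolding is_edge_def by auto
  ultimately show ?thesis
    unfolding hop_def vweight_def eweight_def by (auto simp: mult.commute)
qed

lemma H_hop_eq:
  "H_hop L V t \<Psi> = (\<lambda>S. of_real t * (\<Sum>l\<in>{1..L}. \<Sum>\<sigma>\<in>UNIV. \<Sum>v\<in>V l. cre (v, \<sigma>) (clique_ann l \<sigma> \<Psi>) S))"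
  (is "_ = (\<lambda>S. of_real t * ?B S)")
proof
  fix S
  define X where "X \<sigma> v v' = cre (v, \<sigma>) (ann (v', \<sigma>) \<Psi>) S" for \<sigma> v v'
  have "?B S = (\<Sum>\<sigma>\<in>UNIV. \<Sum>l\<in>{1..L}. \<Sum>v\<in>V l. \<Sum>v'\<in>V l. X \<sigma> v v')"
    unfolding clique_ann_def X_def cre_sum by (rule sum.swap)
  also have "\<dots> = (\<Sum>\<sigma>\<in>UNIV. \<Sum>v\<in>vertices. \<Sum>v'\<in>vertices.
      of_nat (card {l\<in>{1..L}. v \<in> V l \<and> v' \<in> V l}) * X \<sigma> v v')"
    by (rule sum.cong[OF refl], rule sum_pairs_card_common_eq[symmetric])
      (use finite_vertices clique_subset_vertices in auto)
  finally show "H_hop L V t \<Psi> S = of_real t * ?B S"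
    unfolding H_hop_def hop_eq X_def
    by (simp add: sum_distrib_left mult_ac sum.swap[of _ "UNIV :: bool set"])
qed

lemma H_int_eq:
  "H_int L V U \<Psi> = (\<lambda>S. of_real (U * card {v\<in>vertices. (v, True) \<in> S \<and> (v, False) \<in> S}) * \<Psi> S)"
  unfolding H_int_def using finite_vertices
  by (simp add: num_apply if_distrib[of "\<lambda>x. _ * x"] sum.If_cases Int_def mult_ac
      flip: sum_distrib_left cong: if_cong)

lemma Ham_Phi_up: "Ham L V t U (Phi_up L V b) = (\<lambda>_. 0)"
proof -
  have "H_hop L V t (Phi_up L V b) = (\<lambda>_. 0)"
    using clique_ann_up_state[of "sorted_list_of_set whites"] finite_whites
    by (simp add: H_hop_eq Phi_up_eq cre_zero)
  moreover have "H_int L V U (Phi_up L V b) = (\<lambda>_. 0)"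
  proof
    fix S
    have "Phi_up L V b S = 0" if "(v, False) \<in> S" for v
      using that up_state_support[of "sorted_list_of_set whites" S] finite_whites
      unfolding Phi_up_eq by auto
    then show "H_int L V U (Phi_up L V b) S = 0"
      by (cases "\<exists>v. (v, False) \<in> S") (auto simp: H_int_eq)
  qed
  ultimately show ?thesis unfolding Ham_def by simp
qed

lemma H_hop_form:
  "fock_inner modes \<Psi> (H_hop L V t \<Psi>)
    = of_real t * (\<Sum>l\<in>{1..L}. \<Sum>\<sigma>\<in>UNIV. fock_inner modes (clique_ann l \<sigma> \<Psi>) (clique_ann l \<sigma> \<Psi>))"
proof -
  have "fock_inner modes \<Psi> (cre (v, \<sigma>) \<Phi>) = fock_inner modes (ann (v, \<sigma>) \<Psi>) \<Phi>"
    if "l \<in> {1..L}" "v \<in> V l" for l v \<sigma> \<Phi>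
    using that finite_vertices clique_subset_vertices by (intro fock_inner_cre) auto
  then show ?thesis
    unfolding H_hop_eq fock_inner_cmult_right fock_inner_sum_right
    by (simp add: clique_ann_def[of _ _ \<Psi>] fock_inner_sum_left)
qed

lemma Ham_form_nonneg:
  assumes "0 \<le> t" "0 \<le> U"
  shows "0 \<le> fock_inner modes \<Psi> (Ham L V t U \<Psi>)"
proof -
  have "0 \<le> fock_inner modes \<Psi> (H_hop L V t \<Psi>)"
    unfolding H_hop_form using assms(1)
    by (intro mult_nonneg_nonneg sum_nonneg fock_inner_self_nonneg) (simp add: less_eq_complex_def)
  moreover have "0 \<le> fock_inner modes \<Psi> (H_int L V U \<Psi>)"
    unfolding H_int_eq using assms(2) by (intro fock_inner_multiplication_nonneg) simp
  ultimately show ?thesis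
    unfolding Ham_def fock_inner_add_right by simp
qed

end

theorem proposition2:
  fixes L :: nat and V :: "nat \<Rightarrow> 'v::linorder set" and b :: "nat \<Rightarrow> 'v"
    and t U :: real
  assumes "graph_construction L V b" and "t > 0" and "U > 0"
  shows "in_sector L V (card (allV L V) - L) (Phi_up L V b)
    \<and> Phi_up L V b \<noteq> (\<lambda>_. 0)
    \<and> Ham L V t U (Phi_up L V b) = (\<lambda>S. of_real 0 * Phi_up L V b S)
    \<and> (\<forall>(E::real) \<Psi>. in_sector L V (card (allV L V) - L) \<Psi> \<and> \<Psi> \<noteq> (\<lambda>_. 0)
         \<and> Ham L V t U \<Psi> = (\<lambda>S. of_real E * \<Psi> S) \<longrightarrow> 0 \<le> E)"
proof -
  interpret clique_construction L V b
    using assms(1) by unfold_locales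
  have "0 \<le> E"
    if sector: "in_sector L V (card vertices - L) \<Psi>" and nonzero: "\<Psi> \<noteq> (\<lambda>_. 0)"
      and eigen: "Ham L V t U \<Psi> = (\<lambda>S. of_real E * \<Psi> S)"
    for E \<Psi>
  proof -
    obtain S\<^sub>0 where "\<Psi> S\<^sub>0 \<noteq> 0" using nonzero by auto
    moreover have "S\<^sub>0 \<subseteq> modes" using calculation sector unfolding in_sector_def by blast
    ultimately show ?thesis
      using Ham_form_nonneg[of t U \<Psi>] assms(2,3) eigen finite_vertices
      by (intro nonneg_eigenvalue_of_nonneg_form[of modes S\<^sub>0 \<Psi>]) auto
  qed
  then show ?thesis using Phi_up_in_sector Phi_up_nonzero Ham_Phi_up by auto
qed

end
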